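(* Let $S=(G,-1,q)$ be a quaternionic structure with abstract 2-Brauer group $B=B(S)$. Then: (a) $B$ is a boolean group (every element is its own inverse) whose neutral element is $0=q(1,1)$. (b) For all $\alpha\in\mathbb N_0$ and $a,b\in G$, $q(a^\alpha,b)=q(a,b)^\alpha=q(a,b^\alpha)$ (powers taken in $B$). (c) If $S$ has finite order $n$, then $\dim_{\mathbb F_2}B\le\binom n2$ if $-1=1$, and $\dim_{\mathbb F_2}B\le\binom n2+1$ if $-1\neq1$.
   Context: A quaternionic structure is a triple $S=(G,-1,q)$ where $G$ is a multiplicative group in which every element is its own inverse (viewed as $\mathbb F_2$-vector space), $-1\in G$ is a distinguished element (possibly $-1=1$), $-a:=(-1)a$, and $q:G\times G\to Q$ is a surjective map onto a set $Q$ with distinguished element $0$, such that for all $a,b,c,d\in G$: (Q1) $q(a,-a)=0$; (Q2) $q(a,b)=q(b,a)$; (Q3) $q(a,b)=q(a,c)\iff q(a,bc)=0$; (Q4) $q(a,b)=q(c,d)\iff$ there is $x\in G$ with $q(a,b)=q(a,x)=q(c,x)=q(c,d)$. The order of $S$ is $\dim_{\mathbb F_2}G$. The abstract 2-Brauer group $B(S)$ is the abelian group, with operation written $\ast$, generated by the set $Q$ subject only to the relations $q(a,b)\ast q(a,c)=q(a,bc)$ for all $a,b,c\in G$ (the linkage relations). *)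

theory Defs
  imports "HOL-Algebra.Free_Abelian_Groups" "HOL-Algebra.Coset" "HOL-Algebra.Generated_Groups"
begin

text \<open>A quaternionic structure (G, -1, q) with value set Q = image of q and distinguished
  element z (the element written 0 in Q). G is a group in which every element is its own
  inverse; m is the distinguished element -1.\<close>

definition qvals :: "('g, 'b) monoid_scheme \<Rightarrow> ('g \<Rightarrow> 'g \<Rightarrow> 'q) \<Rightarrow> 'q set" where
  "qvals G q = (\<lambda>(a, b). q a b) ` (carrier G \<times> carrier G)"

definition quaternionic_structure ::
  "('g, 'b) monoid_scheme \<Rightarrow> 'g \<Rightarrow> ('g \<Rightarrow> 'g \<Rightarrow> 'q) \<Rightarrow> 'q \<Rightarrow> bool" where
  "quaternionic_structure G m q z \<longleftrightarrow>
     group G \<and> (\<forall>x\<in>carrier G. x \<otimes>\<^bsub>G\<^esub> x = \<one>\<^bsub>G\<^esub>) \<and> m \<in> carrier G \<and> z \<in> qvals G q \<and>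
     (\<forall>a\<in>carrier G. q a (m \<otimes>\<^bsub>G\<^esub> a) = z) \<and>
     (\<forall>a\<in>carrier G. \<forall>b\<in>carrier G. q a b = q b a) \<and>
     (\<forall>a\<in>carrier G. \<forall>b\<in>carrier G. \<forall>c\<in>carrier G.
        q a b = q a c \<longleftrightarrow> q a (b \<otimes>\<^bsub>G\<^esub> c) = z) \<and>
     (\<forall>a\<in>carrier G. \<forall>b\<in>carrier G. \<forall>c\<in>carrier G. \<forall>d\<in>carrier G.
        q a b = q c d \<longleftrightarrow>
        (\<exists>x\<in>carrier G. q a b = q a x \<and> q a x = q c x \<and> q c x = q c d))"

definition linkage_rels :: "('g, 'b) monoid_scheme \<Rightarrow> ('g \<Rightarrow> 'g \<Rightarrow> 'q) \<Rightarrow> ('q \<Rightarrow>\<^sub>0 int) set" where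
  "linkage_rels G q = {frag_of (q a b) + frag_of (q a c) - frag_of (q a (b \<otimes>\<^bsub>G\<^esub> c)) | a b c.
     a \<in> carrier G \<and> b \<in> carrier G \<and> c \<in> carrier G}"

definition linkage_subgroup :: "('g, 'b) monoid_scheme \<Rightarrow> ('g \<Rightarrow> 'g \<Rightarrow> 'q) \<Rightarrow> ('q \<Rightarrow>\<^sub>0 int) set" where
  "linkage_subgroup G q = generate (free_Abelian_group (qvals G q)) (linkage_rels G q)"

definition brauer_group :: "('g, 'b) monoid_scheme \<Rightarrow> ('g \<Rightarrow> 'g \<Rightarrow> 'q) \<Rightarrow> ('q \<Rightarrow>\<^sub>0 int) set monoid" where
  "brauer_group G q = free_Abelian_group (qvals G q) Mod linkage_subgroup G q"

definition brauer_class :: "('g, 'b) monoid_scheme \<Rightarrow> ('g \<Rightarrow> 'g \<Rightarrow> 'q) \<Rightarrow> 'q \<Rightarrow> ('q \<Rightarrow>\<^sub>0 int) set" where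
  "brauer_class G q x = linkage_subgroup G q #>\<^bsub>free_Abelian_group (qvals G q)\<^esub> frag_of x"

end

theory Submission
  imports Defs
begin

(* By the linkage relations, b \<mapsto> [q(a,b)] is a homomorphism G \<rightarrow> B(S) for every a; this gives
   (b), [q(a,1)] = 0 and, since b\<^sup>2 = 1 in G, [q(a,b)]\<^sup>2 = 0, so B(S), being generated by the
   classes [q(a,b)], is boolean. For (c) pick a basis e\<^sub>1, ..., e\<^sub>k (k \<le> n) of G with e\<^sub>1 = -1 if
   -1 \<noteq> 1. By bilinearity and symmetry the classes [q(e\<^sub>i,e\<^sub>j)], i \<le> j, generate B(S), and (Q1)
   turns [q(e,e)] into [q(e,-1)], which is 0 if -1 = 1 and off-diagonal for e \<noteq> e\<^sub>1 otherwise.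
   So B(S) is generated by at most C(n,2) (+1) involutions. *)

lemma (in comm_group) subgroup_involutions: "subgroup {x \<in> carrier G. x \<otimes> x = \<one>} G"
proof (rule subgroupI)
  fix a b assume a: "a \<in> {x \<in> carrier G. x \<otimes> x = \<one>}" and b: "b \<in> {x \<in> carrier G. x \<otimes> x = \<one>}"
  have "a \<otimes> b \<otimes> (a \<otimes> b) = (a \<otimes> a) \<otimes> (b \<otimes> b)"
    using a b by (simp add: m_ac)
  then show "a \<otimes> b \<in> {x \<in> carrier G. x \<otimes> x = \<one>}" using a b by simp
next
  fix a assume a: "a \<in> {x \<in> carrier G. x \<otimes> x = \<one>}"
  then have "inv a = a" by (simp add: inv_equality)
  then show "inv a \<in> {x \<in> carrier G. x \<otimes> x = \<one>}" using a by simp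
qed auto

lemma (in comm_group) generate_involutions:
  assumes "A \<subseteq> carrier G" "\<forall>x\<in>A. x \<otimes> x = \<one>" "y \<in> generate G A"
  shows "y \<otimes> y = \<one>"
  using generate_subgroup_incl[OF _ subgroup_involutions] assms by blast

lemma (in group) subgroup_involution:
  assumes "s \<in> carrier G" "s \<otimes> s = \<one>"
  shows "subgroup {\<one>, s} G"
proof -
  have "inv s = s" using assms by (simp add: inv_equality)
  then show ?thesis using assms by (intro subgroupI) auto
qed

lemma set_mult_eq_image: "H <#>\<^bsub>G\<^esub> K = (\<lambda>(h, k). h \<otimes>\<^bsub>G\<^esub> k) ` (H \<times> K)"
  by (auto simp: set_mult_def)

lemma (in comm_group) card_generate_involutions:
  assumes "finite A" "A \<subseteq> carrier G" "\<forall>x\<in>A. x \<otimes> x = \<one>"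
  shows "finite (generate G A) \<and> card (generate G A) \<le> 2 ^ card A"
  using assms
proof (induction A rule: finite_induct)
  case empty
  then show ?case by (simp add: generate_empty)
next
  case (insert s A)
  let ?S = "{\<one>, s}" and ?K = "generate G A"
  have sub: "generate G (insert s A) \<subseteq> ?S <#> ?K"
  proof (rule generate_subgroup_incl)
    show "subgroup (?S <#> ?K) G"
      using insert.prems by (intro mult_subgroups subgroup_involution generate_is_subgroup) auto
    have "x \<in> ?S <#> ?K" if "x \<in> insert s A" for x
    proof (cases "x = s")
      case True
      then have "x = s \<otimes> \<one>" using insert.prems by simp
      then show ?thesis unfolding set_mult_def by (blast intro: generate.one)
    next
      case False
      then have "x \<in> A" "x = \<one> \<otimes> x" using that insert.prems by auto
      then show ?thesis unfolding set_mult_def by (blast intro: generate.incl)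
    qed
    then show "insert s A \<subseteq> ?S <#> ?K" ..
  qed
  have K: "finite ?K" "card ?K \<le> 2 ^ card A" using insert by auto
  then have fin: "finite (?S <#> ?K)" unfolding set_mult_eq_image by simp
  have "card (generate G (insert s A)) \<le> card (?S <#> ?K)"
    using card_mono[OF fin sub] .
  also have "\<dots> \<le> card (?S \<times> ?K)"
    unfolding set_mult_eq_image by (rule card_image_le) (simp add: K)
  also have "\<dots> \<le> 2 * 2 ^ card A"
  proof -
    have "card ?S \<le> 2" by (cases "s = \<one>") auto
    then show ?thesis using K by (simp add: card_cartesian_product mult_le_mono)
  qed
  also have "\<dots> = 2 ^ card (insert s A)" using insert(1,2) by simp
  finally show ?case using finite_subset[OF sub fin] by simp
qed

lemma (in group) card_generate_insert_ge:
  assumes "finite (carrier G)" "A \<subseteq> carrier G" "g \<in> carrier G" "g \<notin> generate G A"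
  shows "2 * card (generate G A) \<le> card (generate G (insert g A))"
proof -
  let ?K = "generate G A" and ?K' = "generate G (insert g A)"
  have K: "subgroup ?K G" using assms by (intro generate_is_subgroup)
  have K': "subgroup ?K' G" using assms by (intro generate_is_subgroup) auto
  have "g \<in> ?K'" by (simp add: generate.incl)
  have KK': "?K \<subseteq> ?K'" by (rule mono_generate) auto
  have coset: "?K #> g \<subseteq> ?K'"
    using KK' \<open>g \<in> ?K'\<close> K' unfolding r_coset_def by (auto intro: subgroup.m_closed)
  moreover have "?K \<inter> (?K #> g) = {}"
  proof -
    have "g \<in> ?K #> g" using assms K rcos_self by blast
    then have "?K #> g \<noteq> ?K" using assms(4) by blast
    moreover have "?K #> g \<in> rcosets ?K" "?K \<in> rcosets ?K"
      using assms subgroup.subgroup_in_rcosets[OF K] rcosetsI[OF generate_incl] by auto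
    ultimately show ?thesis using rcos_disjoint[OF K] by (auto simp: pairwise_def disjnt_def)
  qed
  moreover have "card (?K #> g) = card ?K"
    using assms by (metis card_rcosets_equal generate_incl rcosetsI)
  moreover have "finite ?K'" using assms(1) K' finite_subset subgroup.subset by metis
  ultimately have "card ?K + card ?K = card (?K \<union> (?K #> g))"
    using KK' card_Un_disjoint[of ?K "?K #> g"] finite_subset by (metis (no_types, lifting))
  also have "\<dots> \<le> card ?K'"
    using KK' coset \<open>finite ?K'\<close> by (intro card_mono) auto
  finally show ?thesis by simp
qed

(* The cardinality hypothesis says that L is independent; adjoining an element outside the
   span at least doubles it, so L extends greedily to an independent generating list. *)
lemma (in group) generating_list_extension:
  assumes "finite (carrier G)" "set L \<subseteq> carrier G" "2 ^ length L \<le> card (generate G (set L))"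
  shows "\<exists>R. set R \<subseteq> carrier G \<and> generate G (set (L @ R)) = carrier G
           \<and> 2 ^ length (L @ R) \<le> card (carrier G)"
  using assms(2,3)
proof (induction "card (carrier G) - card (generate G (set L))" arbitrary: L rule: less_induct)
  case less
  have gen: "generate G (set L) \<subseteq> carrier G" using generate_incl[OF less.prems(1)] .
  show ?case
  proof (cases "generate G (set L) = carrier G")
    case True
    then show ?thesis using less.prems by (intro exI[of _ "[]"]) auto
  next
    case False
    then obtain g where g: "g \<in> carrier G" "g \<notin> generate G (set L)" using gen by blast
    have double: "2 * card (generate G (set L)) \<le> card (generate G (set (L @ [g])))"
      using card_generate_insert_ge[OF assms(1) less.prems(1) g] by simp
    have "card (generate G (set (L @ [g]))) \<le> card (carrier G)"
      using assms(1) less.prems(1) g by (intro card_mono generate_incl) auto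
    moreover have "0 < card (generate G (set L))"
      using less.prems(2) order.strict_trans2[OF zero_less_power] by (metis zero_less_numeral)
    ultimately have "card (carrier G) - card (generate G (set (L @ [g])))
        < card (carrier G) - card (generate G (set L))"
      using double by linarith
    moreover have "2 ^ length (L @ [g]) \<le> card (generate G (set (L @ [g])))"
      using double less.prems(2) by simp
    moreover have "set (L @ [g]) \<subseteq> carrier G" using less.prems(1) g by simp
    ultimately obtain R where "set R \<subseteq> carrier G" "generate G (set ((L @ [g]) @ R)) = carrier G"
        "2 ^ length ((L @ [g]) @ R) \<le> card (carrier G)"
      using less.hyps by blast
    then show ?thesis using g by (intro exI[of _ "g # R"]) simp
  qed
qed

lemma (in group) generating_list_starting_with:
  assumes "finite (carrier G)" "card (carrier G) \<le> 2 ^ n" "x \<in> carrier G"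
  obtains L where "set L \<subseteq> carrier G" "generate G (set L) = carrier G" "length L \<le> n"
    "x \<noteq> \<one> \<Longrightarrow> \<exists>R. L = x # R"
proof -
  have length_le: "length L \<le> n" if "2 ^ length L \<le> card (carrier G)" for L :: "'a list"
  proof -
    have "(2::nat) ^ length L \<le> 2 ^ n" using that assms(2) by (rule le_trans)
    then show ?thesis by simp
  qed
  show thesis
  proof (cases "x = \<one>")
    case True
    have "2 ^ length [] \<le> card (generate G (set []))" by (simp add: generate_empty)
    then obtain R where "set R \<subseteq> carrier G" "generate G (set R) = carrier G"
        "2 ^ length R \<le> card (carrier G)"
      using generating_list_extension[OF assms(1), of "[]"] by auto
    then show thesis using that length_le True by simp
  next
    case False
    have "{\<one>, x} \<subseteq> generate G {x}" by (simp add: generate.one generate.incl)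
    then have "card {\<one>, x} \<le> card (generate G {x})"
      using assms by (intro card_mono finite_subset[OF generate_incl]) auto
    then have "2 ^ length [x] \<le> card (generate G (set [x]))" using False by simp
    then obtain R where R: "set R \<subseteq> carrier G" "generate G (set (x # R)) = carrier G"
        "2 ^ length (x # R) \<le> card (carrier G)"
      using generating_list_extension[OF assms(1), of "[x]"] assms(3) by auto
    then show thesis using that[of "x # R"] length_le[OF R(3)] assms(3) by simp
  qed
qed

lemma card_pairs_le_choose_two:
  "finite {f i j | i j. i < j \<and> j < k} \<and> card {f i j | i j. i < j \<and> j < k} \<le> k choose 2"
proof -
  let ?P = "{P. P \<subseteq> {..<k} \<and> card P = 2}"
  have sub: "{f i j | i j. i < j \<and> j < k} \<subseteq> (\<lambda>P. f (Min P) (Max P)) ` ?P"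
  proof safe
    fix i j :: nat assume "i < j" "j < k"
    then show "f i j \<in> (\<lambda>P. f (Min P) (Max P)) ` ?P" by (intro image_eqI[of _ _ "{i, j}"]) auto
  qed
  have fin: "finite ((\<lambda>P. f (Min P) (Max P)) ` ?P)" by simp
  have "card {f i j | i j. i < j \<and> j < k} \<le> card ((\<lambda>P. f (Min P) (Max P)) ` ?P)"
    using card_mono[OF fin sub] .
  also have "\<dots> \<le> card ?P"
    by (intro card_image_le) auto
  also have "\<dots> = k choose 2" using n_subsets[of "{..<k}" 2] by simp
  finally show ?thesis using finite_subset[OF sub fin] by simp
qed

lemma generate_frag_of_free_Abelian_group:
  "generate (free_Abelian_group S) (frag_of ` S) = carrier (free_Abelian_group S)"
proof
  show "generate (free_Abelian_group S) (frag_of ` S) \<subseteq> carrier (free_Abelian_group S)"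
    by (rule group.generate_incl) auto
next
  show "carrier (free_Abelian_group S) \<subseteq> generate (free_Abelian_group S) (frag_of ` S)"
  proof
    fix x assume "x \<in> carrier (free_Abelian_group S)"
    then have "Poly_Mapping.keys x \<subseteq> S" by simp
    then show "x \<in> generate (free_Abelian_group S) (frag_of ` S)"
    proof (rule free_Abelian_group_induct)
      show "0 \<in> generate (free_Abelian_group S) (frag_of ` S)"
        using generate.one[of "free_Abelian_group S"] by simp
    next
      fix x y
      assume "Poly_Mapping.keys y \<subseteq> S" "x \<in> generate (free_Abelian_group S) (frag_of ` S)"
        "y \<in> generate (free_Abelian_group S) (frag_of ` S)"
      moreover have "subgroup (generate (free_Abelian_group S) (frag_of ` S)) (free_Abelian_group S)"
        by (intro group.generate_is_subgroup) auto
      ultimately show "x - y \<in> generate (free_Abelian_group S) (frag_of ` S)"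
        using subgroup.m_closed subgroup.m_inv_closed by fastforce
    qed (auto intro: generate.incl)
  qed
qed

lemma (in group_hom) image_subset_subgroup_of_generators:
  assumes "generate G A = carrier G" "A \<subseteq> carrier G" "h ` A \<subseteq> W" "subgroup W H"
  shows "h ` carrier G \<subseteq> W"
  using generate_img[OF assms(2)] H.generate_subgroup_incl[OF assms(3,4)] assms(1) by simp

locale quaternionic =
  fixes G :: "('g, 'b) monoid_scheme" (structure) and m :: 'g and q :: "'g \<Rightarrow> 'g \<Rightarrow> 'q" and z :: 'q
  assumes quaternionic_structure: "quaternionic_structure G m q z"
begin

abbreviation "Q \<equiv> qvals G q"
abbreviation "F \<equiv> free_Abelian_group Q"
abbreviation "R \<equiv> linkage_subgroup G q"
abbreviation "B \<equiv> brauer_group G q"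
abbreviation "cls \<equiv> brauer_class G q"

sublocale group G
  using quaternionic_structure unfolding quaternionic_structure_def by blast

lemma involution: "a \<in> carrier G \<Longrightarrow> a \<otimes> a = \<one>"
  using quaternionic_structure unfolding quaternionic_structure_def by blast

lemma minus_one_closed: "m \<in> carrier G"
  using quaternionic_structure unfolding quaternionic_structure_def by blast

lemma q_minus: "a \<in> carrier G \<Longrightarrow> q a (m \<otimes> a) = z"
  using quaternionic_structure unfolding quaternionic_structure_def by blast

lemma q_commute: "a \<in> carrier G \<Longrightarrow> b \<in> carrier G \<Longrightarrow> q a b = q b a"
  using quaternionic_structure unfolding quaternionic_structure_def by blast

lemma q_eq_iff:
  "a \<in> carrier G \<Longrightarrow> b \<in> carrier G \<Longrightarrow> c \<in> carrier G \<Longrightarrow> q a b = q a c \<longleftrightarrow> q a (b \<otimes> c) = z"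
  using quaternionic_structure unfolding quaternionic_structure_def by blast

lemma z_eq_q_one_one: "z = q \<one> \<one>"
  using q_eq_iff[of \<one> \<one> \<one>] by simp

lemma q_in_qvals: "a \<in> carrier G \<Longrightarrow> b \<in> carrier G \<Longrightarrow> q a b \<in> Q"
  unfolding qvals_def by force

lemma qvals_eq: "Q = (\<lambda>(a, b). q a b) ` (carrier G \<times> carrier G)"
  unfolding qvals_def ..

lemma linkage_rels_subset: "linkage_rels G q \<subseteq> carrier F"
proof
  fix r assume "r \<in> linkage_rels G q"
  then obtain a b c where abc: "a \<in> carrier G" "b \<in> carrier G" "c \<in> carrier G"
    and r: "r = frag_of (q a b) + frag_of (q a c) - frag_of (q a (b \<otimes> c))"
    unfolding linkage_rels_def by blast
  have "Poly_Mapping.keys r \<subseteq> {q a b, q a c, q a (b \<otimes> c)}"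
    unfolding r using keys_diff keys_add by fastforce
  then show "r \<in> carrier F" using abc q_in_qvals by auto
qed

lemma subgroup_linkage: "subgroup R F"
  unfolding linkage_subgroup_def
  by (rule group.generate_is_subgroup[OF group_free_Abelian_group linkage_rels_subset])

sublocale B: comm_group B
  unfolding brauer_group_def
  by (rule comm_group.abelian_FactGroup[OF abelian_free_Abelian_group subgroup_linkage])

lemma projection_hom: "(\<lambda>f. R #>\<^bsub>F\<^esub> f) \<in> hom F B"
  unfolding brauer_group_def
  by (intro normal.r_coset_hom_Mod comm_group.subgroup_imp_normal abelian_free_Abelian_group subgroup_linkage)

lemma brauer_class_closed: "x \<in> Q \<Longrightarrow> cls x \<in> carrier B"
  unfolding brauer_class_def using projection_hom by (auto simp: hom_def)

lemma brauer_class_linkage: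
  assumes "a \<in> carrier G" "b \<in> carrier G" "c \<in> carrier G"
  shows "cls (q a b) \<otimes>\<^bsub>B\<^esub> cls (q a c) = cls (q a (b \<otimes> c))"
proof -
  let ?x = "frag_of (q a b)" and ?y = "frag_of (q a c)" and ?w = "frag_of (q a (b \<otimes> c))"
  let ?\<pi> = "\<lambda>f. R #>\<^bsub>F\<^esub> f"
  have rel: "?x + ?y - ?w \<in> R"
    unfolding linkage_subgroup_def linkage_rels_def by (rule generate.incl) (use assms in blast)
  have closed: "?x \<in> carrier F" "?y \<in> carrier F" "?w \<in> carrier F" "?x + ?y - ?w \<in> carrier F"
    using assms q_in_qvals subgroup.mem_carrier[OF subgroup_linkage rel] by auto
  have "cls (q a b) \<otimes>\<^bsub>B\<^esub> cls (q a c) = ?\<pi> ((?x + ?y - ?w) \<otimes>\<^bsub>F\<^esub> ?w)"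
    unfolding brauer_class_def using hom_mult[OF projection_hom closed(1,2)] by simp
  also have "\<dots> = ?\<pi> (?x + ?y - ?w) \<otimes>\<^bsub>B\<^esub> ?\<pi> ?w"
    using hom_mult[OF projection_hom closed(4,3)] .
  also have "?\<pi> (?x + ?y - ?w) = \<one>\<^bsub>B\<^esub>"
    unfolding brauer_group_def using subgroup.rcos_const[OF subgroup_linkage group_free_Abelian_group rel] by simp
  finally show ?thesis
    using brauer_class_closed[OF q_in_qvals] assms unfolding brauer_class_def by simp
qed

lemma brauer_class_q_hom: "a \<in> carrier G \<Longrightarrow> group_hom G B (\<lambda>b. cls (q a b))"
  by (intro group_hom.intro group_hom_axioms.intro homI is_group B.is_group)
    (simp_all add: brauer_class_closed q_in_qvals brauer_class_linkage)

lemma brauer_class_q_one: "a \<in> carrier G \<Longrightarrow> cls (q a \<one>) = \<one>\<^bsub>B\<^esub>"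
  using group_hom.hom_one[OF brauer_class_q_hom] .

lemma brauer_class_z: "cls z = \<one>\<^bsub>B\<^esub>"
  using brauer_class_q_one z_eq_q_one_one by simp

lemma brauer_class_q_pow_right:
  "a \<in> carrier G \<Longrightarrow> b \<in> carrier G \<Longrightarrow> cls (q a (b [^] (k::nat))) = cls (q a b) [^]\<^bsub>B\<^esub> k"
  using group_hom.hom_nat_pow[OF brauer_class_q_hom] .

lemma brauer_class_q_pow_left:
  "a \<in> carrier G \<Longrightarrow> b \<in> carrier G \<Longrightarrow> cls (q (a [^] (k::nat)) b) = cls (q a b) [^]\<^bsub>B\<^esub> k"
  using brauer_class_q_pow_right q_commute by simp

lemma carrier_brauer_group_generate: "carrier B = generate B (cls ` Q)"
proof -
  have "carrier B = (\<lambda>f. R #>\<^bsub>F\<^esub> f) ` generate F (frag_of ` Q)"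
    unfolding brauer_group_def carrier_FactGroup generate_frag_of_free_Abelian_group ..
  also have "\<dots> = generate B ((\<lambda>f. R #>\<^bsub>F\<^esub> f) ` frag_of ` Q)"
    by (intro group_hom.generate_img[symmetric] group_hom.intro group_hom_axioms.intro projection_hom)
      auto
  finally show ?thesis unfolding brauer_class_def image_image .
qed

lemma brauer_class_q_involution:
  "a \<in> carrier G \<Longrightarrow> b \<in> carrier G \<Longrightarrow> cls (q a b) \<otimes>\<^bsub>B\<^esub> cls (q a b) = \<one>\<^bsub>B\<^esub>"
  using brauer_class_linkage involution brauer_class_q_one by simp

lemma brauer_group_involution: "x \<in> carrier B \<Longrightarrow> x \<otimes>\<^bsub>B\<^esub> x = \<one>\<^bsub>B\<^esub>"
  using B.generate_involutions[of "cls ` Q"] brauer_class_closed brauer_class_q_involution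
  by (auto simp: carrier_brauer_group_generate qvals_eq)

lemma brauer_class_q_self: "a \<in> carrier G \<Longrightarrow> cls (q a a) = cls (q a m)"
proof -
  assume a: "a \<in> carrier G"
  have closed: "cls (q a a) \<in> carrier B" "cls (q a m) \<in> carrier B"
    using a minus_one_closed brauer_class_closed q_in_qvals by auto
  have "cls (q a m) \<otimes>\<^bsub>B\<^esub> cls (q a a) = \<one>\<^bsub>B\<^esub>"
    using brauer_class_linkage[OF a minus_one_closed a] q_minus[OF a] brauer_class_z by simp
  then have "inv\<^bsub>B\<^esub> (cls (q a a)) = cls (q a m)"
    using closed by (intro B.inv_equality)
  moreover have "inv\<^bsub>B\<^esub> (cls (q a a)) = cls (q a a)"
    using closed brauer_group_involution by (intro B.inv_equality)
  ultimately show ?thesis by simp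
qed

lemma brauer_class_q_in_subgroup:
  assumes "subgroup W B" "generate G A = carrier G" "A \<subseteq> carrier G"
    and "\<And>a b. a \<in> A \<Longrightarrow> b \<in> A \<Longrightarrow> cls (q a b) \<in> W"
    and "a \<in> carrier G" "b \<in> carrier G"
  shows "cls (q a b) \<in> W"
proof -
  have extend: "cls (q a b) \<in> W" if "a \<in> carrier G" "\<forall>b\<in>A. cls (q a b) \<in> W" "b \<in> carrier G" for a b
    using group_hom.image_subset_subgroup_of_generators[OF brauer_class_q_hom assms(2,3) _ assms(1)] that
    by blast
  have "cls (q a b) \<in> W" if "b \<in> A" for b
    using extend[of b a] assms(3-5) q_commute that by auto
  then show ?thesis using extend assms(5,6) by blast
qed

lemma carrier_brauer_group_generate_list:
  assumes "set L \<subseteq> carrier G" "generate G (set L) = carrier G" "m \<noteq> \<one> \<Longrightarrow> \<exists>L'. L = m # L'"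
  shows "carrier B = generate B ({cls (q (L ! i) (L ! j)) | i j. i < j \<and> j < length L}
    \<union> (if m = \<one> then {} else {cls (q m m)}))" (is "_ = generate B ?S")
proof
  have L: "L ! i \<in> carrier G" if "i < length L" for i
    using assms(1) that by auto
  have S: "?S \<subseteq> carrier B"
    using L minus_one_closed by (auto intro!: brauer_class_closed q_in_qvals)
  then show "generate B ?S \<subseteq> carrier B" by (rule B.generate_incl)
  have W: "subgroup (generate B ?S) B" using B.generate_is_subgroup[OF S] .
  have pair: "cls (q (L ! i) (L ! j)) \<in> generate B ?S" if "i < j" "j < length L" for i j
    by (rule generate.incl) (use that in blast)
  have off_diagonal: "cls (q (L ! i) (L ! j)) \<in> generate B ?S"
    if "i \<noteq> j" "i < length L" "j < length L" for i j
  proof (cases "i < j")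
    case True
    then show ?thesis using pair that(3) by blast
  next
    case False
    then have "cls (q (L ! j) (L ! i)) \<in> generate B ?S" using pair that by simp
    then show ?thesis using q_commute[OF L L] that(2,3) by simp
  qed
  \<comment> \<open>By (Q1), cls (q a a) = cls (q a m), which is an off-diagonal class unless a is the head m.\<close>
  have diagonal: "cls (q (L ! i) (L ! i)) \<in> generate B ?S" if "i < length L" for i
  proof (cases "m = \<one>")
    case True
    then have "cls (q (L ! i) (L ! i)) = \<one>\<^bsub>B\<^esub>"
      using brauer_class_q_self brauer_class_q_one L[OF that] by simp
    then show ?thesis by (simp add: generate.one)
  next
    case False
    then obtain L' where "L = m # L'" using assms(3) by blast
    then have L0: "L ! 0 = m" "0 < length L" by auto
    show ?thesis
    proof (cases "i = 0")
      case True
      have "cls (q m m) \<in> generate B ?S" by (rule generate.incl) (simp add: \<open>m \<noteq> \<one>\<close>)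
      then show ?thesis using True L0 by simp
    next
      case False
      then have "cls (q (L ! i) (L ! 0)) \<in> generate B ?S" using off_diagonal that L0(2) by blast
      then show ?thesis using brauer_class_q_self[OF L[OF that]] L0(1) by simp
    qed
  qed
  have "cls (q a b) \<in> generate B ?S" if "a \<in> carrier G" "b \<in> carrier G" for a b
  proof (rule brauer_class_q_in_subgroup[OF W assms(2,1) _ that])
    fix a b assume "a \<in> set L" "b \<in> set L"
    then obtain i j where ij: "i < length L" "j < length L" "a = L ! i" "b = L ! j"
      by (metis in_set_conv_nth)
    show "cls (q a b) \<in> generate B ?S"
    proof (cases "i = j")
      case True
      then show ?thesis using diagonal ij by simp
    next
      case False
      then show ?thesis using off_diagonal ij by simp
    qed
  qed
  then have "cls ` Q \<subseteq> generate B ?S" by (auto simp: qvals_eq)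
  then show "carrier B \<subseteq> generate B ?S"
    using carrier_brauer_group_generate B.generate_subgroup_incl[OF _ W] by simp
qed

lemma card_brauer_group_le:
  assumes "finite (carrier G)" "card (carrier G) \<le> 2 ^ n"
  shows "finite (carrier B) \<and> card (carrier B) \<le> 2 ^ ((n choose 2) + (if m = \<one> then 0 else 1))"
proof -
  obtain L where L: "set L \<subseteq> carrier G" "generate G (set L) = carrier G" "length L \<le> n"
      "m \<noteq> \<one> \<Longrightarrow> \<exists>L'. L = m # L'"
    using generating_list_starting_with[OF assms minus_one_closed] by auto
  let ?P = "{cls (q (L ! i) (L ! j)) | i j. i < j \<and> j < length L}"
  let ?S = "?P \<union> (if m = \<one> then {} else {cls (q m m)})"
  have P: "finite ?P" "card ?P \<le> n choose 2"
    using card_pairs_le_choose_two[of "\<lambda>i j. cls (q (L ! i) (L ! j))" "length L"]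
      binomial_right_mono[OF L(3), of 2] by auto
  then have "card ?S \<le> (n choose 2) + (if m = \<one> then 0 else 1)"
    by (auto simp: card_insert_if)
  then have "2 ^ card ?S \<le> (2::nat) ^ ((n choose 2) + (if m = \<one> then 0 else 1))"
    by (rule power_increasing) simp
  moreover have B: "carrier B = generate B ?S"
    using carrier_brauer_group_generate_list[OF L(1,2,4)] .
  then have "?S \<subseteq> carrier B" by (auto intro: generate.incl)
  then have "finite (generate B ?S) \<and> card (generate B ?S) \<le> 2 ^ card ?S"
    using P(1) brauer_group_involution by (intro B.card_generate_involutions) auto
  ultimately show ?thesis
    unfolding B by linarith
qed

end


theorem lemma4:
  fixes G :: "('g, 'b) monoid_scheme" and m :: 'g and q :: "'g \<Rightarrow> 'g \<Rightarrow> 'q" and z :: 'q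
  assumes S: "quaternionic_structure G m q z"
  shows "((\<forall>x\<in>carrier (brauer_group G q). x \<otimes>\<^bsub>brauer_group G q\<^esub> x = \<one>\<^bsub>brauer_group G q\<^esub>)
        \<and> z = q \<one>\<^bsub>G\<^esub> \<one>\<^bsub>G\<^esub>
        \<and> brauer_class G q z = \<one>\<^bsub>brauer_group G q\<^esub>)
    \<and> (\<forall>(\<alpha>::nat). \<forall>a\<in>carrier G. \<forall>b\<in>carrier G.
        brauer_class G q (q (a [^]\<^bsub>G\<^esub> \<alpha>) b) = brauer_class G q (q a b) [^]\<^bsub>brauer_group G q\<^esub> \<alpha>
      \<and> brauer_class G q (q a (b [^]\<^bsub>G\<^esub> \<alpha>)) = brauer_class G q (q a b) [^]\<^bsub>brauer_group G q\<^esub> \<alpha>)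
    \<and> (\<forall>n::nat. finite (carrier G) \<and> card (carrier G) = 2 ^ n \<longrightarrow>
        finite (carrier (brauer_group G q)) \<and>
        card (carrier (brauer_group G q)) \<le> 2 ^ ((n choose 2) + (if m = \<one>\<^bsub>G\<^esub> then 0 else 1)))"
proof -
  interpret quaternionic G m q z using S by (rule quaternionic.intro)
  have boolean: "\<forall>x\<in>carrier B. x \<otimes>\<^bsub>B\<^esub> x = \<one>\<^bsub>B\<^esub>"
    using brauer_group_involution by blast
  have powers: "\<forall>(\<alpha>::nat). \<forall>a\<in>carrier G. \<forall>b\<in>carrier G.
      cls (q (a [^]\<^bsub>G\<^esub> \<alpha>) b) = cls (q a b) [^]\<^bsub>B\<^esub> \<alpha>
    \<and> cls (q a (b [^]\<^bsub>G\<^esub> \<alpha>)) = cls (q a b) [^]\<^bsub>B\<^esub> \<alpha>"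
    using brauer_class_q_pow_left brauer_class_q_pow_right by simp
  have bound: "\<forall>n::nat. finite (carrier G) \<and> card (carrier G) = 2 ^ n \<longrightarrow>
      finite (carrier B) \<and> card (carrier B) \<le> 2 ^ ((n choose 2) + (if m = \<one>\<^bsub>G\<^esub> then 0 else 1))"
    using card_brauer_group_le[OF _ eq_imp_le] by blast
  show ?thesis
    by (intro conjI boolean z_eq_q_one_one brauer_class_z powers bound)
qed

end
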